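(* Assume Hypothesis (H$_1$) (i.e. $|f'|$ is $(\alpha,m)$-convex on $[ma,b]$). Then for all $x\in[a,b]$, $\lambda\in[0,1]$ and $\theta>0$, $$\big|S_f(mx,\lambda,\theta,ma,mb)\big|\le\frac{m^\theta}{b-a}\Big\{(x-a)^{\theta+1}\Big(|f'(mx)|A_2(\alpha,\theta,\lambda)+m|f'(a)|A_3(\alpha,\theta,\lambda)\Big)+(b-x)^{\theta+1}\Big(|f'(mx)|A_2(\alpha,\theta,\lambda)+m|f'(b)|A_3(\alpha,\theta,\lambda)\Big)\Big\}.$$
   Context: Let $\Gamma$ denote Euler's Gamma function. Given $m\in(0,1]$, $a<b$, $x\in[a,b]$, $\lambda\in[0,1]$, $\theta>0$ and a function $f$ integrable on $[ma,mb]$, the Riemann–Liouville fractional integrals appearing below are $J^\theta_{(mx)^-}f(ma)=\frac{1}{\Gamma(\theta)}\int_{ma}^{mx}(s-ma)^{\theta-1}f(s)\,ds$ and $J^\theta_{(mx)^+}f(mb)=\frac{1}{\Gamma(\theta)}\int_{mx}^{mb}(mb-s)^{\theta-1}f(s)\,ds$ (each equal to $0$ if its interval of integration is degenerate), and $$S_f(mx,\lambda,\theta,ma,mb)=(1-\lambda)m^{\theta-1}\frac{(x-a)^\theta+(b-x)^\theta}{b-a}f(mx)+\lambda m^{\theta-1}\frac{(x-a)^\theta f(ma)+(b-x)^\theta f(mb)}{b-a}-\frac{\Gamma(\theta+1)}{m(b-a)}\Big[J^\theta_{(mx)^-}f(ma)+J^\theta_{(mx)^+}f(mb)\Big].$$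 $(\alpha,m)$-convexity: for $(\alpha,m)\in[0,1]\times(0,1]$ and an interval $K\subseteq[0,\infty)$, a function $g:K\to\mathbb{R}$ is $(\alpha,m)$-convex on $K$ if $g(tX+m(1-t)Y)\le t^\alpha g(X)+m(1-t^\alpha)g(Y)$ for all $X,Y\in K$ and $t\in[0,1]$ with $tX+m(1-t)Y\in K$ (convention $0^0=1$). Hypothesis (H$_q$): $I\subseteq[0,\infty)$ is an interval, $f:I\to\mathbb{R}$ is differentiable on the interior $I^\circ$, $m\in(0,1]$, $\alpha\in[0,1]$, $a<b$ with $ma,b\in I^\circ$, $f'$ is Lebesgue integrable on $[ma,mb]$, and $|f'|^q$ is $(\alpha,m)$-convex on $[ma,b]$. Constants: $A_1(\theta,\lambda)=\frac{2\theta\lambda^{1+\frac1\theta}+1}{\theta+1}-\lambda$, $A_2(\alpha,\theta,\lambda)=\frac{2\theta\lambda^{1+\frac{1+\alpha}{\theta}}}{(\alpha+1)(\alpha+\theta+1)}+\frac{1}{\alpha+\theta+1}-\frac{\lambda}{\alpha+1}$, $A_3(\alpha,\theta,\lambda)=A_1(\theta,\lambda)-A_2(\alpha,\theta,\lambda)$. *)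

theory Defs
  imports "HOL-Analysis.Analysis"
begin

text \<open>Power with the convention 0^0 = 1 (Isabelle's powr has 0 powr 0 = 0).\<close>
definition pow00 :: "real \<Rightarrow> real \<Rightarrow> real" where
  "pow00 t \<alpha> = (if t = 0 \<and> \<alpha> = 0 then 1 else t powr \<alpha>)"

definition alpha_m_convex_on :: "real \<Rightarrow> real \<Rightarrow> real set \<Rightarrow> (real \<Rightarrow> real) \<Rightarrow> bool" where
  "alpha_m_convex_on \<alpha> m K g \<longleftrightarrow>
     (\<forall>X\<in>K. \<forall>Y\<in>K. \<forall>t\<in>{0..1}. t * X + m * (1 - t) * Y \<in> K \<longrightarrow>
        g (t * X + m * (1 - t) * Y) \<le> pow00 t \<alpha> * g X + m * (1 - pow00 t \<alpha>) * g Y)"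

text \<open>Riemann--Liouville fractional integrals J^theta_{(mx)^-} f(ma) and J^theta_{(mx)^+} f(mb).\<close>
definition RL_left :: "real \<Rightarrow> (real \<Rightarrow> real) \<Rightarrow> real \<Rightarrow> real \<Rightarrow> real" where
  "RL_left \<theta> f lo hi = (1 / Gamma \<theta>) * integral {lo..hi} (\<lambda>s. (s - lo) powr (\<theta> - 1) * f s)"

definition RL_right :: "real \<Rightarrow> (real \<Rightarrow> real) \<Rightarrow> real \<Rightarrow> real \<Rightarrow> real" where
  "RL_right \<theta> f lo hi = (1 / Gamma \<theta>) * integral {lo..hi} (\<lambda>s. (hi - s) powr (\<theta> - 1) * f s)"

definition S_f :: "(real \<Rightarrow> real) \<Rightarrow> real \<Rightarrow> real \<Rightarrow> real \<Rightarrow> real \<Rightarrow> real \<Rightarrow> real \<Rightarrow> real" where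
  "S_f f m x lam \<theta> a b =
     (1 - lam) * m powr (\<theta> - 1) * (((x - a) powr \<theta> + (b - x) powr \<theta>) / (b - a)) * f (m * x)
   + lam * m powr (\<theta> - 1) * (((x - a) powr \<theta> * f (m * a) + (b - x) powr \<theta> * f (m * b)) / (b - a))
   - Gamma (\<theta> + 1) / (m * (b - a)) * (RL_left \<theta> f (m * a) (m * x) + RL_right \<theta> f (m * x) (m * b))"

definition A1 :: "real \<Rightarrow> real \<Rightarrow> real" where
  "A1 \<theta> lam = (2 * \<theta> * lam powr (1 + 1 / \<theta>) + 1) / (\<theta> + 1) - lam"

definition A2 :: "real \<Rightarrow> real \<Rightarrow> real \<Rightarrow> real" where
  "A2 \<alpha> \<theta> lam = 2 * \<theta> * lam powr (1 + (1 + \<alpha>) / \<theta>) / ((\<alpha> + 1) * (\<alpha> + \<theta> + 1))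
     + 1 / (\<alpha> + \<theta> + 1) - lam / (\<alpha> + 1)"

definition A3 :: "real \<Rightarrow> real \<Rightarrow> real \<Rightarrow> real" where
  "A3 \<alpha> \<theta> lam = A1 \<theta> lam - A2 \<alpha> \<theta> lam"

end

theory Submission
  imports Defs
begin

text \<open>Integrating both Riemann--Liouville integrals by parts, and writing the \<lambda>-terms as integrals
  of f' by the fundamental theorem of calculus, exhibits m (b - a) S_f as the difference of the integrals
  of f' against the kernels (s - ma)^\<theta> - \<lambda> (mx - ma)^\<theta> on [ma, mx] and (mb - s)^\<theta> - \<lambda> (mb - mx)^\<theta>
  on [mx, mb]. A point of [ma, mx] is s = t mx + m (1 - t) a, so (\<alpha>,m)-convexity bounds |f'(s)| by
  t^\<alpha> |f'(mx)| + m (1 - t^\<alpha>) |f'(a)|, and symmetrically on [mx, mb] with b. Rescaling to [0, 1],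
  what remains are the integrals of |t^\<theta> - \<lambda>| t^\<beta> over [0, 1] for \<beta> = \<alpha> and \<beta> = 0, which are
  A2 and A1; hence the coefficient A1 - A2 = A3 of m |f'(a)| and m |f'(b)|.\<close>

lemma has_integral_lam_minus_powr_mult_powr:
  fixes lam \<theta> \<beta> c d :: real
  assumes "\<theta> > 0" "\<beta> \<ge> 0" "0 \<le> c" "c \<le> d"
  defines "F \<equiv> \<lambda>t. lam * t powr (\<beta> + 1) / (\<beta> + 1) - t powr (\<theta> + \<beta> + 1) / (\<theta> + \<beta> + 1)"
  shows "((\<lambda>t. (lam - t powr \<theta>) * t powr \<beta>) has_integral (F d - F c)) {c..d}"
proof (rule fundamental_theorem_of_calculus_interior)
  show "c \<le> d" by fact
  show "continuous_on {c..d} F" unfolding F_def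
    using assms by (intro continuous_intros continuous_on_powr') auto
  fix t assume "t \<in> {c<..<d}"
  then have t: "t > 0"
    using assms by auto
  have "(F has_real_derivative lam * ((\<beta> + 1) * t powr (\<beta> + 1 - 1)) / (\<beta> + 1)
      - (\<theta> + \<beta> + 1) * t powr (\<theta> + \<beta> + 1 - 1) / (\<theta> + \<beta> + 1)) (at t)"
    unfolding F_def by (intro DERIV_diff DERIV_cdivide DERIV_cmult has_real_derivative_powr t)
  moreover have "lam * ((\<beta> + 1) * t powr (\<beta> + 1 - 1)) / (\<beta> + 1) = lam * t powr \<beta>"
    and "(\<theta> + \<beta> + 1) * t powr (\<theta> + \<beta> + 1 - 1) / (\<theta> + \<beta> + 1) = t powr \<theta> * t powr \<beta>"
    using assms by (simp_all add: powr_add)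
  ultimately show "(F has_vector_derivative (lam - t powr \<theta>) * t powr \<beta>) (at t)"
    by (simp add: algebra_simps has_real_derivative_iff_has_vector_derivative)
qed

lemma has_integral_abs_powr_minus_mult_pow00:
  fixes lam \<theta> \<beta> :: real
  assumes \<theta>: "\<theta> > 0" and \<beta>: "\<beta> \<ge> 0" and lam: "0 \<le> lam" "lam \<le> 1"
  shows "((\<lambda>t. \<bar>t powr \<theta> - lam\<bar> * pow00 t \<beta>) has_integral
     2 * \<theta> * lam powr (1 + (1 + \<beta>) / \<theta>) / ((\<beta> + 1) * (\<beta> + \<theta> + 1))
     + 1 / (\<beta> + \<theta> + 1) - lam / (\<beta> + 1)) {0..1}"
proof -
  define F where "F \<equiv> \<lambda>t. lam * t powr (\<beta> + 1) / (\<beta> + 1) - t powr (\<theta> + \<beta> + 1) / (\<theta> + \<beta> + 1)"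
  \<comment> \<open>\<open>t powr \<theta> - lam\<close> changes sign at \<open>c\<close>\<close>
  define c where "c = lam powr (1 / \<theta>)"
  have c: "0 \<le> c" "c \<le> 1" "c powr \<theta> = lam"
    unfolding c_def using lam \<theta> by (auto simp: powr_le1 powr_powr)
  have "((\<lambda>t. (lam - t powr \<theta>) * t powr \<beta>) has_integral (F c - F 0)) {0..c}"
    unfolding F_def using has_integral_lam_minus_powr_mult_powr[OF \<theta> \<beta> order_refl c(1)] by simp
  moreover have "\<bar>t powr \<theta> - lam\<bar> * pow00 t \<beta> = (lam - t powr \<theta>) * t powr \<beta>" if "t \<in> box 0 c" for t
    using that c \<theta> powr_mono2[of \<theta> t c] by (auto simp: pow00_def)
  ultimately have left: "((\<lambda>t. \<bar>t powr \<theta> - lam\<bar> * pow00 t \<beta>) has_integral (F c - F 0)) {0..c}"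
    using has_integral_spike_interior[of "\<lambda>t. (lam - t powr \<theta>) * t powr \<beta>" _ 0 c] by simp
  have "((\<lambda>t. - ((lam - t powr \<theta>) * t powr \<beta>)) has_integral - (F 1 - F c)) {c..1}"
    unfolding F_def using has_integral_lam_minus_powr_mult_powr[OF \<theta> \<beta> c(1,2)] by (intro has_integral_neg) simp
  moreover have "\<bar>t powr \<theta> - lam\<bar> * pow00 t \<beta> = - ((lam - t powr \<theta>) * t powr \<beta>)" if "t \<in> box c 1" for t
    using that c \<theta> powr_mono2[of \<theta> c t] by (auto simp: pow00_def algebra_simps)
  ultimately have right: "((\<lambda>t. \<bar>t powr \<theta> - lam\<bar> * pow00 t \<beta>) has_integral - (F 1 - F c)) {c..1}"
    using has_integral_spike_interior[of "\<lambda>t. - ((lam - t powr \<theta>) * t powr \<beta>)" _ c 1] by simp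
  define L where "L = lam powr (1 + (1 + \<beta>) / \<theta>)"
  have "lam * c powr (\<beta> + 1) = L"
    using \<theta> \<beta> lam by (cases "lam = 0") (auto simp: L_def c_def powr_powr powr_add add_divide_distrib)
  moreover have "c powr (\<theta> + \<beta> + 1) = L"
    using \<theta> lam by (simp add: L_def c_def powr_powr add_divide_distrib algebra_simps)
  ultimately have "F c = L * \<theta> / ((\<beta> + 1) * (\<beta> + \<theta> + 1))"
    using \<theta> \<beta> by (simp add: F_def field_simps)
  moreover have "F 0 = 0" "F 1 = lam / (\<beta> + 1) - 1 / (\<theta> + \<beta> + 1)"
    using \<theta> \<beta> by (simp_all add: F_def)
  ultimately have closed_form: "F c - F 0 + - (F 1 - F c) = 2 * \<theta> * L / ((\<beta> + 1) * (\<beta> + \<theta> + 1))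
      + 1 / (\<beta> + \<theta> + 1) - lam / (\<beta> + 1)"
    by (simp add: algebra_simps)
  show ?thesis
    using has_integral_combine[OF c(1,2) left right] unfolding closed_form L_def .
qed

lemma A1_has_integral:
  assumes "\<theta> > 0" "0 \<le> lam" "lam \<le> 1"
  shows "((\<lambda>t. \<bar>t powr \<theta> - lam\<bar>) has_integral A1 \<theta> lam) {0..1}"
proof -
  have "(\<lambda>t. \<bar>t powr \<theta> - lam\<bar> * pow00 t 0) = (\<lambda>t. \<bar>t powr \<theta> - lam\<bar>)"
    by (auto simp: pow00_def)
  then show ?thesis
    using has_integral_abs_powr_minus_mult_pow00[OF assms(1) order_refl assms(2,3)] assms(1)
    by (simp add: A1_def add_divide_distrib)
qed

lemma A2_has_integral:
  assumes "\<theta> > 0" "0 \<le> \<alpha>" "0 \<le> lam" "lam \<le> 1"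
  shows "((\<lambda>t. \<bar>t powr \<theta> - lam\<bar> * pow00 t \<alpha>) has_integral A2 \<alpha> \<theta> lam) {0..1}"
  unfolding A2_def using has_integral_abs_powr_minus_mult_pow00[OF assms(1,2,3,4)] by simp

lemma has_integral_rescale_unit_interval:
  fixes k :: "real \<Rightarrow> real"
  assumes "(k has_integral J) {0..1}" and "L > 0"
  shows "((\<lambda>s. k ((s - p) / L)) has_integral L * J) {p..p + L}"
proof -
  have "((\<lambda>s. k ((1 / L) *\<^sub>R s + - p / L)) has_integral J /\<^sub>R (1 / L) ^ DIM(real))
      (cbox ((0 - - p / L) /\<^sub>R (1 / L)) ((1 - - p / L) /\<^sub>R (1 / L)))"
    using has_integral_affinity'[of k J 0 1 "1 / L" "- p / L"] assms by simp
  moreover have "(\<lambda>s. k ((1 / L) *\<^sub>R s + - p / L)) = (\<lambda>s. k ((s - p) / L))"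
    by (auto simp: diff_divide_distrib)
  moreover have "cbox ((0 - - p / L) /\<^sub>R (1 / L)) ((1 - - p / L) /\<^sub>R (1 / L)) = {p..p + L}"
    using assms by (simp add: field_simps)
  ultimately show ?thesis
    using assms by (simp add: mult.commute)
qed

lemma integrable_on_continuous_mult:
  fixes g h :: "real \<Rightarrow> real"
  assumes "continuous_on {a..b} g" and "h absolutely_integrable_on {a..b}"
  shows "(\<lambda>s. g s * h s) integrable_on {a..b}"
proof (rule set_lebesgue_integral_eq_integral(1), rule absolutely_integrable_bounded_measurable_product_real)
  show "g \<in> borel_measurable (lebesgue_on {a..b})"
    by (rule continuous_imp_measurable_on_sets_lebesgue[OF assms(1)]) auto
  show "bounded (g ` {a..b})"
    by (intro compact_imp_bounded compact_continuous_image assms(1)) auto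
qed (use assms(2) in auto)

lemma has_integral_derivative_real:
  fixes f f' :: "real \<Rightarrow> real"
  assumes "p \<le> u" and "\<And>s. s \<in> {p..u} \<Longrightarrow> (f has_real_derivative f' s) (at s)"
  shows "(f' has_integral (f u - f p)) {p..u}"
  using assms by (intro fundamental_theorem_of_calculus)
    (auto simp: has_real_derivative_iff_has_vector_derivative[symmetric] intro: has_field_derivative_at_within)

lemma abs_integral_kernel_mult_le:
  fixes g :: "real \<Rightarrow> real"
  assumes pu: "p \<le> u" and \<theta>: "\<theta> > 0" and lam: "0 \<le> lam" "lam \<le> 1" and \<alpha>: "0 \<le> \<alpha>"
    and int: "g absolutely_integrable_on {p..u}"
    and bound: "\<And>s. s \<in> {p..u} \<Longrightarrow> p < u \<Longrightarrow>
      \<bar>g s\<bar> \<le> pow00 ((s - p) / (u - p)) \<alpha> * G1 + (1 - pow00 ((s - p) / (u - p)) \<alpha>) * G2"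
  shows "\<bar>integral {p..u} (\<lambda>s. ((s - p) powr \<theta> - lam * (u - p) powr \<theta>) * g s)\<bar>
    \<le> (u - p) powr (\<theta> + 1) * (G1 * A2 \<alpha> \<theta> lam + G2 * A3 \<alpha> \<theta> lam)"
proof (cases "p = u")
  case False
  define L where "L = u - p"
  have L: "L > 0" "u = p + L"
    using False pu by (auto simp: L_def)
  define k where "k t = \<bar>t powr \<theta> - lam\<bar> * (pow00 t \<alpha> * G1 + (1 - pow00 t \<alpha>) * G2)" for t
  have k_eq: "k = (\<lambda>t. G1 * (\<bar>t powr \<theta> - lam\<bar> * pow00 t \<alpha>) + G2 * (\<bar>t powr \<theta> - lam\<bar> - \<bar>t powr \<theta> - lam\<bar> * pow00 t \<alpha>))"
    by (auto simp: k_def fun_eq_iff algebra_simps)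
  have "(k has_integral G1 * A2 \<alpha> \<theta> lam + G2 * A3 \<alpha> \<theta> lam) {0..1}"
    unfolding k_eq A3_def
    by (intro has_integral_add has_integral_mult_right has_integral_diff
        A1_has_integral[OF \<theta> lam] A2_has_integral[OF \<theta> \<alpha> lam])
  from has_integral_mult_right[OF has_integral_rescale_unit_interval[OF this L(1)], of "L powr \<theta>"]
  have majorant: "((\<lambda>s. L powr \<theta> * k ((s - p) / L)) has_integral
      (u - p) powr (\<theta> + 1) * (G1 * A2 \<alpha> \<theta> lam + G2 * A3 \<alpha> \<theta> lam)) {p..u}"
    using L by (simp add: powr_add mult.assoc)
  have "continuous_on {p..u} (\<lambda>s. (s - p) powr \<theta> - lam * (u - p) powr \<theta>)"
    using \<theta> by (intro continuous_intros continuous_on_powr') auto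
  then have integrable: "(\<lambda>s. ((s - p) powr \<theta> - lam * (u - p) powr \<theta>) * g s) integrable_on {p..u}"
    using int by (rule integrable_on_continuous_mult)
  have "norm (((s - p) powr \<theta> - lam * (u - p) powr \<theta>) * g s) \<le> L powr \<theta> * k ((s - p) / L)"
    if s: "s \<in> {p..u}" for s
  proof -
    define t where "t = (s - p) / L"
    have "t \<ge> 0" "s - p = t * L"
      using s L by (auto simp: t_def)
    then have "(s - p) powr \<theta> - lam * (u - p) powr \<theta> = L powr \<theta> * (t powr \<theta> - lam)"
      unfolding L_def[symmetric] using L(1) by (simp add: powr_mult algebra_simps)
    then have "norm (((s - p) powr \<theta> - lam * (u - p) powr \<theta>) * g s) = L powr \<theta> * (\<bar>t powr \<theta> - lam\<bar> * \<bar>g s\<bar>)"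
      by (simp add: abs_mult)
    also have "\<dots> \<le> L powr \<theta> * (\<bar>t powr \<theta> - lam\<bar> * (pow00 t \<alpha> * G1 + (1 - pow00 t \<alpha>) * G2))"
      using bound[OF s] L(1) by (intro mult_left_mono) (auto simp: t_def L_def)
    finally show ?thesis
      by (simp add: k_def t_def)
  qed
  then show ?thesis
    using integral_norm_bound_integral[OF integrable has_integral_integrable[OF majorant]]
      integral_unique[OF majorant] by simp
qed simp

lemma abs_integral_reflected_kernel_mult_le:
  fixes g :: "real \<Rightarrow> real"
  assumes uq: "u \<le> q" and \<theta>: "\<theta> > 0" and lam: "0 \<le> lam" "lam \<le> 1" and \<alpha>: "0 \<le> \<alpha>"
    and int: "g absolutely_integrable_on {u..q}"
    and bound: "\<And>s. s \<in> {u..q} \<Longrightarrow> u < q \<Longrightarrow>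
      \<bar>g s\<bar> \<le> pow00 ((q - s) / (q - u)) \<alpha> * G1 + (1 - pow00 ((q - s) / (q - u)) \<alpha>) * G2"
  shows "\<bar>integral {u..q} (\<lambda>s. ((q - s) powr \<theta> - lam * (q - u) powr \<theta>) * g s)\<bar>
    \<le> (q - u) powr (\<theta> + 1) * (G1 * A2 \<alpha> \<theta> lam + G2 * A3 \<alpha> \<theta> lam)"
proof -
  have "\<bar>integral {- q..- u} (\<lambda>s. ((s - - q) powr \<theta> - lam * (- u - - q) powr \<theta>) * g (- s))\<bar>
      \<le> (- u - - q) powr (\<theta> + 1) * (G1 * A2 \<alpha> \<theta> lam + G2 * A3 \<alpha> \<theta> lam)"
  proof (rule abs_integral_kernel_mult_le[OF _ \<theta> lam \<alpha>])
    fix s assume "s \<in> {- q..- u}" "- q < - u"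
    with bound[of "- s"] show "\<bar>g (- s)\<bar> \<le> pow00 ((s - - q) / (- u - - q)) \<alpha> * G1
        + (1 - pow00 ((s - - q) / (- u - - q)) \<alpha>) * G2"
      by (simp add: add.commute)
  qed (use uq int in auto)
  then show ?thesis
    using Henstock_Kurzweil_Integration.integral_reflect_real[of q u
        "\<lambda>s. ((q - s) powr \<theta> - lam * (q - u) powr \<theta>) * g s"]
    by (simp add: add.commute)
qed

lemma Gamma_mult_RL_left_by_parts:
  fixes f f' :: "real \<Rightarrow> real"
  assumes pu: "p \<le> u" and \<theta>: "\<theta> > 0"
    and der: "\<And>s. s \<in> {p..u} \<Longrightarrow> (f has_real_derivative f' s) (at s)"
    and int: "f' absolutely_integrable_on {p..u}"
  shows "Gamma (\<theta> + 1) * RL_left \<theta> f p u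
    = (u - p) powr \<theta> * f u - integral {p..u} (\<lambda>s. (s - p) powr \<theta> * f' s)"
proof -
  define H where "H = (\<lambda>s. (s - p) powr \<theta> * f s)"
  have kernel: "continuous_on {p..u} (\<lambda>s. (s - p) powr \<theta>)"
    using \<theta> by (intro continuous_on_powr' continuous_intros) auto
  moreover have "continuous_on {p..u} f"
    using der by (meson DERIV_isCont continuous_at_imp_continuous_on)
  ultimately have "continuous_on {p..u} H"
    unfolding H_def by (rule continuous_on_mult)
  then have "((\<lambda>s. \<theta> * (s - p) powr (\<theta> - 1) * f s + (s - p) powr \<theta> * f' s) has_integral (H u - H p)) {p..u}"
  proof (rule fundamental_theorem_of_calculus_interior[OF pu])
    fix s assume s: "s \<in> {p<..<u}"
    have "((\<lambda>s. (s - p) powr \<theta>) has_real_derivative \<theta> * (s - p) powr (\<theta> - 1) * 1) (at s)"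
      using s by (intro DERIV_chain2[OF has_real_derivative_powr] derivative_eq_intros) auto
    from DERIV_mult[OF this der] s
    show "(H has_vector_derivative \<theta> * (s - p) powr (\<theta> - 1) * f s + (s - p) powr \<theta> * f' s) (at s)"
      unfolding H_def has_real_derivative_iff_has_vector_derivative[symmetric]
      by (auto elim: DERIV_cong simp: algebra_simps)
  qed
  from has_integral_diff[OF this integrable_integral[OF integrable_on_continuous_mult[OF kernel int]]]
  have by_parts: "((\<lambda>s. \<theta> * ((s - p) powr (\<theta> - 1) * f s)) has_integral
      (u - p) powr \<theta> * f u - integral {p..u} (\<lambda>s. (s - p) powr \<theta> * f' s)) {p..u}"
    using \<theta> by (simp add: H_def algebra_simps)
  moreover have "Gamma (\<theta> + 1) = \<theta> * Gamma \<theta>"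
    using \<theta> by (intro Gamma_plus1) (auto elim: nonpos_Ints_cases)
  moreover have "Gamma \<theta> > 0"
    using \<theta> by simp
  ultimately show ?thesis
    using integral_unique[OF by_parts] by (simp add: RL_left_def)
qed

lemma Gamma_mult_RL_right_by_parts:
  fixes f f' :: "real \<Rightarrow> real"
  assumes uq: "u \<le> q" and \<theta>: "\<theta> > 0"
    and der: "\<And>s. s \<in> {u..q} \<Longrightarrow> (f has_real_derivative f' s) (at s)"
    and int: "f' absolutely_integrable_on {u..q}"
  shows "Gamma (\<theta> + 1) * RL_right \<theta> f u q
    = (q - u) powr \<theta> * f u + integral {u..q} (\<lambda>s. (q - s) powr \<theta> * f' s)"
proof -
  have "RL_right \<theta> f u q = RL_left \<theta> (\<lambda>s. f (- s)) (- q) (- u)"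
    using Henstock_Kurzweil_Integration.integral_reflect_real[of q u "\<lambda>s. (q - s) powr (\<theta> - 1) * f s"]
    by (simp add: RL_left_def RL_right_def add.commute)
  moreover have "integral {- q..- u} (\<lambda>s. (s - - q) powr \<theta> * - f' (- s))
      = - integral {u..q} (\<lambda>s. (q - s) powr \<theta> * f' s)"
    using Henstock_Kurzweil_Integration.integral_reflect_real[of q u "\<lambda>s. (q - s) powr \<theta> * f' s"]
    by (simp add: add.commute)
  moreover have "Gamma (\<theta> + 1) * RL_left \<theta> (\<lambda>s. f (- s)) (- q) (- u)
      = (- u - - q) powr \<theta> * f (- (- u)) - integral {- q..- u} (\<lambda>s. (s - - q) powr \<theta> * - f' (- s))"
  proof (rule Gamma_mult_RL_left_by_parts[where f'="\<lambda>s. - f' (- s)"])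
    fix s assume "s \<in> {- q..- u}"
    with der[of "- s"] show "((\<lambda>s. f (- s)) has_real_derivative - f' (- s)) (at s)"
      by (simp add: DERIV_mirror)
  qed (use uq \<theta> int set_integrable_mult_right[of "- 1" lebesgue "{- q..- u}" "\<lambda>s. f' (- s)"] in auto)
  ultimately show ?thesis
    by simp
qed

lemma integral_kernel_mult_deriv_eq_RL_left:
  fixes f f' :: "real \<Rightarrow> real"
  assumes pu: "p \<le> u" and \<theta>: "\<theta> > 0"
    and der: "\<And>s. s \<in> {p..u} \<Longrightarrow> (f has_real_derivative f' s) (at s)"
    and int: "f' absolutely_integrable_on {p..u}"
  shows "integral {p..u} (\<lambda>s. ((s - p) powr \<theta> - lam * (u - p) powr \<theta>) * f' s)
    = (u - p) powr \<theta> * ((1 - lam) * f u + lam * f p) - Gamma (\<theta> + 1) * RL_left \<theta> f p u"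
proof -
  have "continuous_on {p..u} (\<lambda>s. (s - p) powr \<theta>)"
    using \<theta> by (intro continuous_on_powr' continuous_intros) auto
  then have "((\<lambda>s. (s - p) powr \<theta> * f' s - lam * (u - p) powr \<theta> * f' s) has_integral
      integral {p..u} (\<lambda>s. (s - p) powr \<theta> * f' s) - lam * (u - p) powr \<theta> * (f u - f p)) {p..u}"
    using pu der int by (intro has_integral_diff integrable_integral integrable_on_continuous_mult
        has_integral_mult_right has_integral_derivative_real)
  then have "integral {p..u} (\<lambda>s. ((s - p) powr \<theta> - lam * (u - p) powr \<theta>) * f' s)
      = integral {p..u} (\<lambda>s. (s - p) powr \<theta> * f' s) - lam * (u - p) powr \<theta> * (f u - f p)"
    by (simp add: integral_unique left_diff_distrib)
  with Gamma_mult_RL_left_by_parts[OF pu \<theta> der int] show ?thesis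
    by algebra
qed

lemma integral_kernel_mult_deriv_eq_RL_right:
  fixes f f' :: "real \<Rightarrow> real"
  assumes uq: "u \<le> q" and \<theta>: "\<theta> > 0"
    and der: "\<And>s. s \<in> {u..q} \<Longrightarrow> (f has_real_derivative f' s) (at s)"
    and int: "f' absolutely_integrable_on {u..q}"
  shows "integral {u..q} (\<lambda>s. ((q - s) powr \<theta> - lam * (q - u) powr \<theta>) * f' s)
    = Gamma (\<theta> + 1) * RL_right \<theta> f u q - (q - u) powr \<theta> * ((1 - lam) * f u + lam * f q)"
proof -
  have "continuous_on {u..q} (\<lambda>s. (q - s) powr \<theta>)"
    using \<theta> by (intro continuous_on_powr' continuous_intros) auto
  then have "((\<lambda>s. (q - s) powr \<theta> * f' s - lam * (q - u) powr \<theta> * f' s) has_integral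
      integral {u..q} (\<lambda>s. (q - s) powr \<theta> * f' s) - lam * (q - u) powr \<theta> * (f q - f u)) {u..q}"
    using uq der int by (intro has_integral_diff integrable_integral integrable_on_continuous_mult
        has_integral_mult_right has_integral_derivative_real)
  then have "integral {u..q} (\<lambda>s. ((q - s) powr \<theta> - lam * (q - u) powr \<theta>) * f' s)
      = integral {u..q} (\<lambda>s. (q - s) powr \<theta> * f' s) - lam * (q - u) powr \<theta> * (f q - f u)"
    by (simp add: integral_unique left_diff_distrib)
  with Gamma_mult_RL_right_by_parts[OF uq \<theta> der int] show ?thesis
    by algebra
qed

lemma S_f_eq_kernel_integrals:
  fixes f f' :: "real \<Rightarrow> real"
  assumes m: "m > 0" and ab: "a < b" and x: "x \<in> {a..b}" and \<theta>: "\<theta> > 0"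
    and der: "\<And>s. s \<in> {m * a..m * b} \<Longrightarrow> (f has_real_derivative f' s) (at s)"
    and int: "f' absolutely_integrable_on {m * a..m * b}"
  shows "S_f f m x lam \<theta> a b =
    (integral {m * a..m * x} (\<lambda>s. ((s - m * a) powr \<theta> - lam * (m * x - m * a) powr \<theta>) * f' s)
     - integral {m * x..m * b} (\<lambda>s. ((m * b - s) powr \<theta> - lam * (m * b - m * x) powr \<theta>) * f' s))
    / (m * (b - a))"
proof -
  have mx: "m * a \<le> m * x" "m * x \<le> m * b"
    using m x by auto
  have "m * x - m * a = m * (x - a)" "m * b - m * x = m * (b - x)"
    by (simp_all add: algebra_simps)
  then have powers: "(m * x - m * a) powr \<theta> = m * m powr (\<theta> - 1) * (x - a) powr \<theta>"
    "(m * b - m * x) powr \<theta> = m * m powr (\<theta> - 1) * (b - x) powr \<theta>"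
    using m x by (simp_all add: powr_mult powr_diff)
  have left: "integral {m * a..m * x} (\<lambda>s. ((s - m * a) powr \<theta> - lam * (m * x - m * a) powr \<theta>) * f' s)
      = (m * x - m * a) powr \<theta> * ((1 - lam) * f (m * x) + lam * f (m * a))
        - Gamma (\<theta> + 1) * RL_left \<theta> f (m * a) (m * x)"
    using mx \<theta> der by (intro integral_kernel_mult_deriv_eq_RL_left)
      (auto intro: absolutely_integrable_on_subinterval[OF int])
  have right: "integral {m * x..m * b} (\<lambda>s. ((m * b - s) powr \<theta> - lam * (m * b - m * x) powr \<theta>) * f' s)
      = Gamma (\<theta> + 1) * RL_right \<theta> f (m * x) (m * b)
        - (m * b - m * x) powr \<theta> * ((1 - lam) * f (m * x) + lam * f (m * b))"
    using mx \<theta> der by (intro integral_kernel_mult_deriv_eq_RL_right)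
      (auto intro: absolutely_integrable_on_subinterval[OF int])
  show ?thesis
    unfolding left right unfolding powers S_f_def
    using m ab by (simp add: divide_simps) algebra
qed

lemma abs_S_f_le_of_kernel_bounds:
  fixes f f' :: "real \<Rightarrow> real"
  assumes m: "m > 0" and ab: "a < b" and x: "x \<in> {a..b}" and \<theta>: "\<theta> > 0"
    and der: "\<And>s. s \<in> {m * a..m * b} \<Longrightarrow> (f has_real_derivative f' s) (at s)"
    and int: "f' absolutely_integrable_on {m * a..m * b}"
    and left: "\<bar>integral {m * a..m * x} (\<lambda>s. ((s - m * a) powr \<theta> - lam * (m * x - m * a) powr \<theta>) * f' s)\<bar>
      \<le> (m * x - m * a) powr (\<theta> + 1) * CL"
    and right: "\<bar>integral {m * x..m * b} (\<lambda>s. ((m * b - s) powr \<theta> - lam * (m * b - m * x) powr \<theta>) * f' s)\<bar>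
      \<le> (m * b - m * x) powr (\<theta> + 1) * CR"
  shows "\<bar>S_f f m x lam \<theta> a b\<bar> \<le> m powr \<theta> / (b - a) * ((x - a) powr (\<theta> + 1) * CL + (b - x) powr (\<theta> + 1) * CR)"
proof -
  have "m * x - m * a = m * (x - a)" "m * b - m * x = m * (b - x)"
    by (simp_all add: algebra_simps)
  then have powers: "(m * x - m * a) powr (\<theta> + 1) = m * m powr \<theta> * (x - a) powr (\<theta> + 1)"
    "(m * b - m * x) powr (\<theta> + 1) = m * m powr \<theta> * (b - x) powr (\<theta> + 1)"
    using m x by (simp_all add: powr_mult powr_add)
  define IL where "IL = integral {m * a..m * x} (\<lambda>s. ((s - m * a) powr \<theta> - lam * (m * x - m * a) powr \<theta>) * f' s)"
  define IR where "IR = integral {m * x..m * b} (\<lambda>s. ((m * b - s) powr \<theta> - lam * (m * b - m * x) powr \<theta>) * f' s)"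
  have "m * (b - a) > 0"
    using m ab by simp
  then have "\<bar>S_f f m x lam \<theta> a b\<bar> = \<bar>IL - IR\<bar> / (m * (b - a))"
    using S_f_eq_kernel_integrals[OF m ab x \<theta> der int] by (simp add: IL_def IR_def)
  also have "\<dots> \<le> (\<bar>IL\<bar> + \<bar>IR\<bar>) / (m * (b - a))"
    using \<open>m * (b - a) > 0\<close> by (intro divide_right_mono abs_triangle_ineq4) simp
  also have "\<dots> \<le> ((m * x - m * a) powr (\<theta> + 1) * CL + (m * b - m * x) powr (\<theta> + 1) * CR) / (m * (b - a))"
    using \<open>m * (b - a) > 0\<close> left right by (intro divide_right_mono add_mono) (simp_all add: IL_def IR_def)
  also have "\<dots> = m powr \<theta> / (b - a) * ((x - a) powr (\<theta> + 1) * CL + (b - x) powr (\<theta> + 1) * CR)"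
    unfolding powers using m ab by (simp add: field_simps)
  finally show ?thesis .
qed

lemma alpha_m_convex_on_le_pow00:
  assumes conv: "alpha_m_convex_on \<alpha> m K g" and "X \<in> K" "Y \<in> K" "s \<in> K"
    and "X \<noteq> m * Y" and "s \<in> closed_segment (m * Y) X"
  shows "g s \<le> pow00 ((s - m * Y) / (X - m * Y)) \<alpha> * g X
    + m * (1 - pow00 ((s - m * Y) / (X - m * Y)) \<alpha>) * g Y"
proof -
  obtain t where t: "t \<in> {0..1}" "s = (1 - t) * (m * Y) + t * X"
    using assms(6) unfolding closed_segment_def by auto
  have "X - m * Y \<noteq> 0"
    using assms(5) by simp
  then have "(s - m * Y) / (X - m * Y) = t"
    by (simp add: t(2) field_simps)
  moreover have "t * X + m * (1 - t) * Y = s"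
    by (simp add: t(2) algebra_simps)
  ultimately show ?thesis
    using conv assms(2-4) t(1) unfolding alpha_m_convex_on_def by metis
qed

lemma abs_integral_kernel_mult_le_alpha_m_convex:
  fixes g :: "real \<Rightarrow> real"
  assumes conv: "alpha_m_convex_on \<alpha> m K (\<lambda>y. \<bar>g y\<bar>)"
    and K: "X \<in> K" "Y \<in> K" "{m * Y..X} \<subseteq> K" and le: "m * Y \<le> X"
    and \<theta>: "\<theta> > 0" and lam: "0 \<le> lam" "lam \<le> 1" and \<alpha>: "0 \<le> \<alpha>"
    and int: "g absolutely_integrable_on {m * Y..X}"
  shows "\<bar>integral {m * Y..X} (\<lambda>s. ((s - m * Y) powr \<theta> - lam * (X - m * Y) powr \<theta>) * g s)\<bar>
    \<le> (X - m * Y) powr (\<theta> + 1) * (\<bar>g X\<bar> * A2 \<alpha> \<theta> lam + m * \<bar>g Y\<bar> * A3 \<alpha> \<theta> lam)"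
proof (rule abs_integral_kernel_mult_le[OF le \<theta> lam \<alpha> int])
  fix s assume "s \<in> {m * Y..X}" "m * Y < X"
  then have "\<bar>g s\<bar> \<le> pow00 ((s - m * Y) / (X - m * Y)) \<alpha> * \<bar>g X\<bar>
      + m * (1 - pow00 ((s - m * Y) / (X - m * Y)) \<alpha>) * \<bar>g Y\<bar>"
    using K by (intro alpha_m_convex_on_le_pow00[OF conv]) (auto simp: closed_segment_eq_real_ivl)
  then show "\<bar>g s\<bar> \<le> pow00 ((s - m * Y) / (X - m * Y)) \<alpha> * \<bar>g X\<bar>
      + (1 - pow00 ((s - m * Y) / (X - m * Y)) \<alpha>) * (m * \<bar>g Y\<bar>)"
    by (simp add: algebra_simps)
qed

lemma abs_integral_reflected_kernel_mult_le_alpha_m_convex: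
  fixes g :: "real \<Rightarrow> real"
  assumes conv: "alpha_m_convex_on \<alpha> m K (\<lambda>y. \<bar>g y\<bar>)"
    and K: "X \<in> K" "Y \<in> K" "{X..m * Y} \<subseteq> K" and le: "X \<le> m * Y"
    and \<theta>: "\<theta> > 0" and lam: "0 \<le> lam" "lam \<le> 1" and \<alpha>: "0 \<le> \<alpha>"
    and int: "g absolutely_integrable_on {X..m * Y}"
  shows "\<bar>integral {X..m * Y} (\<lambda>s. ((m * Y - s) powr \<theta> - lam * (m * Y - X) powr \<theta>) * g s)\<bar>
    \<le> (m * Y - X) powr (\<theta> + 1) * (\<bar>g X\<bar> * A2 \<alpha> \<theta> lam + m * \<bar>g Y\<bar> * A3 \<alpha> \<theta> lam)"
proof (rule abs_integral_reflected_kernel_mult_le[OF le \<theta> lam \<alpha> int])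
  fix s assume "s \<in> {X..m * Y}" "X < m * Y"
  then have "\<bar>g s\<bar> \<le> pow00 ((s - m * Y) / (X - m * Y)) \<alpha> * \<bar>g X\<bar>
      + m * (1 - pow00 ((s - m * Y) / (X - m * Y)) \<alpha>) * \<bar>g Y\<bar>"
    using K by (intro alpha_m_convex_on_le_pow00[OF conv]) (auto simp: closed_segment_eq_real_ivl)
  moreover have "(s - m * Y) / (X - m * Y) = (m * Y - s) / (m * Y - X)"
    by (metis minus_diff_eq minus_divide_divide)
  ultimately show "\<bar>g s\<bar> \<le> pow00 ((m * Y - s) / (m * Y - X)) \<alpha> * \<bar>g X\<bar>
      + (1 - pow00 ((m * Y - s) / (m * Y - X)) \<alpha>) * (m * \<bar>g Y\<bar>)"
    by (simp add: algebra_simps)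
qed

lemma absolutely_integrable_on_if_set_integrable_lborel:
  fixes g :: "real \<Rightarrow> real"
  assumes "set_integrable lborel S g"
  shows "g absolutely_integrable_on S"
proof -
  have "integrable lborel (\<lambda>x. indicator S x *\<^sub>R g x)"
    using assms unfolding set_integrable_def .
  then have "integrable (completion lborel) (\<lambda>x. indicator S x *\<^sub>R g x)"
    using integrable_completion borel_measurable_integrable by blast
  then show ?thesis
    unfolding set_integrable_def .
qed

theorem mainTheorem4:
  fixes I :: "real set" and f f' :: "real \<Rightarrow> real"
    and m \<alpha> a b x lam \<theta> :: real
  assumes I_int: "is_interval I" and I_nonneg: "I \<subseteq> {0..}"
    and f_deriv: "\<And>y. y \<in> interior I \<Longrightarrow> (f has_real_derivative f' y) (at y)"
    and m: "0 < m" "m \<le> 1"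
    and \<alpha>: "0 \<le> \<alpha>" "\<alpha> \<le> 1"
    and ab: "a < b" "m * a \<in> interior I" "b \<in> interior I"
    and f'_int: "set_integrable lborel {m * a..m * b} f'"
    and conv: "alpha_m_convex_on \<alpha> m {m * a..b} (\<lambda>y. \<bar>f' y\<bar>)"
    and x: "x \<in> {a..b}" and lam: "lam \<in> {0..1}" and \<theta>: "\<theta> > 0"
  shows "\<bar>S_f f m x lam \<theta> a b\<bar> \<le> m powr \<theta> / (b - a) *
     ((x - a) powr (\<theta> + 1) * (\<bar>f' (m * x)\<bar> * A2 \<alpha> \<theta> lam + m * \<bar>f' a\<bar> * A3 \<alpha> \<theta> lam)
    + (b - x) powr (\<theta> + 1) * (\<bar>f' (m * x)\<bar> * A2 \<alpha> \<theta> lam + m * \<bar>f' b\<bar> * A3 \<alpha> \<theta> lam))"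
proof -
  have "0 \<le> m * a"
    using ab(2) interior_subset I_nonneg by auto
  then have "m * a \<le> a" "m * b \<le> b"
    using m ab(1) mult_right_mono[of m 1 a] mult_right_mono[of m 1 b]
    by (auto simp: zero_le_mult_iff)
  have "is_interval (interior I)"
    using I_int by (simp add: is_interval_convex_1 convex_interior)
  then have interval_interior: "{m * a..b} \<subseteq> interior I"
    using ab(2,3) unfolding is_interval_1 by (meson atLeastAtMost_iff subsetI)
  have der: "\<And>s. s \<in> {m * a..m * b} \<Longrightarrow> (f has_real_derivative f' s) (at s)"
    using interval_interior \<open>m * b \<le> b\<close> by (intro f_deriv) auto
  have int: "f' absolutely_integrable_on {m * a..m * b}"
    by (rule absolutely_integrable_on_if_set_integrable_lborel[OF f'_int])
  have mx: "m * a \<le> m * x" "m * x \<le> m * b" and lam': "0 \<le> lam" "lam \<le> 1"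
    using m x lam by auto
  show ?thesis
  proof (rule abs_S_f_le_of_kernel_bounds[OF m(1) ab(1) x \<theta> der int])
    show "\<bar>integral {m * a..m * x} (\<lambda>s. ((s - m * a) powr \<theta> - lam * (m * x - m * a) powr \<theta>) * f' s)\<bar>
      \<le> (m * x - m * a) powr (\<theta> + 1) * (\<bar>f' (m * x)\<bar> * A2 \<alpha> \<theta> lam + m * \<bar>f' a\<bar> * A3 \<alpha> \<theta> lam)"
      by (rule abs_integral_kernel_mult_le_alpha_m_convex[OF conv _ _ _ mx(1) \<theta> lam' \<alpha>(1)])
        (use mx \<open>m * a \<le> a\<close> \<open>m * b \<le> b\<close> ab(1)
          in \<open>auto intro: absolutely_integrable_on_subinterval[OF int]\<close>)
    show "\<bar>integral {m * x..m * b} (\<lambda>s. ((m * b - s) powr \<theta> - lam * (m * b - m * x) powr \<theta>) * f' s)\<bar>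
      \<le> (m * b - m * x) powr (\<theta> + 1) * (\<bar>f' (m * x)\<bar> * A2 \<alpha> \<theta> lam + m * \<bar>f' b\<bar> * A3 \<alpha> \<theta> lam)"
      by (rule abs_integral_reflected_kernel_mult_le_alpha_m_convex[OF conv _ _ _ mx(2) \<theta> lam' \<alpha>(1)])
        (use mx \<open>m * b \<le> b\<close> ab(1)
          in \<open>auto intro: absolutely_integrable_on_subinterval[OF int]\<close>)
  qed
qed

end
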